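(* Let $K$ be a finite set (of origin–destination pairs) and, for each $k \in K$, let $T_k$ be a finite nonempty set (of departure time options) and $Q_k > 0$ a given demand. A flow vector is $\mathbf{Q} = \{q_k(t) : k \in K, t \in T_k\}$, and for each flow vector let $C_k(t) = C_k(t;\mathbf{Q}) \in \mathbb{R}$ be given average travel costs, an arbitrary function of $\mathbf{Q}$. Consider the nonlinear mathematical program (NMP) in the variables $\mathbf{Q}$ and $\boldsymbol{\rho} = \{\rho_k : k \in K\}$: $$\min_{\mathbf{Q},\boldsymbol{\rho}} \ \zeta(\mathbf{Q},\boldsymbol{\rho}) = \sum_{k \in K}\sum_{t \in T_k} \big(C_k(t;\mathbf{Q}) - \rho_k\big)\, q_k(t)$$ subject to $C_k(t;\mathbf{Q}) - \rho_k \ge 0$ for all $k \in K, t \in T_k$; $q_k(t) \ge 0$ for all $k\in K, t \in T_k$; $Q_k - \sum_{t \in T_k} q_k(t) = 0$ for all $k \in K$; and $\rho_k \ge 0$ for all $k \in K$. If $(\mathbf{Q}^*, \boldsymbol{\rho}^* )$ is an optimal solution of this NMP, then for every $k \in K$, $$\rho_k^* = \min_{t \in T_k} C_k(t;\mathbf{Q}^* ).$$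
   Context: This is a departure-time user-equilibrium model for public transport: $K$ is the set of origin–destination (OD) pairs, $T_k$ the set of train departure times available at the origin of OD pair $k$, $Q_k$ the total demand of OD pair $k$, $q_k(t)$ the number of users of OD pair $k$ choosing departure time $t$, and $C_k(t;\mathbf{Q})$ the average generalized travel cost of option $(k,t)$ under flow distribution $\mathbf{Q}$ (in the paper computed by a network-loading simulation; here it may be any function of $\mathbf{Q}$). The variables $\rho_k$ are auxiliary per-OD cost levels. *)

theory Defs
  imports Main "HOL-Library.FuncSet" Complex_Main
begin

text \<open>A flow vector is represented as q :: 'k => 't => real, with q k t meaningful for
  k in K and t in T k; canonically q k t = 0 elsewhere (so a flow vector is exactly the
  family indexed by the pairs (k,t)). Likewise rho k = 0 outside K.\<close>

definition zeta ::
  "'k set \<Rightarrow> ('k \<Rightarrow> 't set) \<Rightarrow> (('k \<Rightarrow> 't \<Rightarrow> real) \<Rightarrow> 'k \<Rightarrow> 't \<Rightarrow> real)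
    \<Rightarrow> ('k \<Rightarrow> 't \<Rightarrow> real) \<Rightarrow> ('k \<Rightarrow> real) \<Rightarrow> real" where
  "zeta K T C q \<rho> = (\<Sum>k\<in>K. \<Sum>t\<in>T k. (C q k t - \<rho> k) * q k t)"

definition nmp_feasible ::
  "'k set \<Rightarrow> ('k \<Rightarrow> 't set) \<Rightarrow> ('k \<Rightarrow> real) \<Rightarrow> (('k \<Rightarrow> 't \<Rightarrow> real) \<Rightarrow> 'k \<Rightarrow> 't \<Rightarrow> real)
    \<Rightarrow> ('k \<Rightarrow> 't \<Rightarrow> real) \<Rightarrow> ('k \<Rightarrow> real) \<Rightarrow> bool" where
  "nmp_feasible K T D C q \<rho> \<longleftrightarrow>
     (\<forall>k t. (k \<notin> K \<or> t \<notin> T k) \<longrightarrow> q k t = 0) \<and>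
     (\<forall>k. k \<notin> K \<longrightarrow> \<rho> k = 0) \<and>
     (\<forall>k\<in>K. \<forall>t\<in>T k. C q k t - \<rho> k \<ge> 0) \<and>
     (\<forall>k\<in>K. \<forall>t\<in>T k. q k t \<ge> 0) \<and>
     (\<forall>k\<in>K. D k - (\<Sum>t\<in>T k. q k t) = 0) \<and>
     (\<forall>k\<in>K. \<rho> k \<ge> 0)"

definition nmp_optimal ::
  "'k set \<Rightarrow> ('k \<Rightarrow> 't set) \<Rightarrow> ('k \<Rightarrow> real) \<Rightarrow> (('k \<Rightarrow> 't \<Rightarrow> real) \<Rightarrow> 'k \<Rightarrow> 't \<Rightarrow> real)
    \<Rightarrow> ('k \<Rightarrow> 't \<Rightarrow> real) \<Rightarrow> ('k \<Rightarrow> real) \<Rightarrow> bool" where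
  "nmp_optimal K T D C q \<rho> \<longleftrightarrow>
     nmp_feasible K T D C q \<rho> \<and>
     (\<forall>q' \<rho>'. nmp_feasible K T D C q' \<rho>' \<longrightarrow> zeta K T C q \<rho> \<le> zeta K T C q' \<rho>')"

end

theory Submission
  imports Defs
begin

text \<open>For a fixed flow vector the objective is affine in the cost levels: raising \<open>\<rho> k\<close> lowers
  \<open>\<zeta>\<close> by the increase times the total flow \<open>D k\<close> of OD pair \<open>k\<close>. Raising every \<open>\<rho> k\<close> to the
  least cost \<open>min\<^sub>t C k t\<close> keeps the point feasible, so at an optimum no level can be raised,
  i.e. each \<open>\<rho> k\<close> already equals that minimum.\<close>

lemma zeta_diff_levels:
  "zeta K T C q \<rho> - zeta K T C q \<rho>' = (\<Sum>k\<in>K. (\<rho>' k - \<rho> k) * (\<Sum>t\<in>T k. q k t))"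
  unfolding zeta_def
  by (simp add: sum_subtractf[symmetric] sum_distrib_left algebra_simps)

lemma nmp_optimal_levels_maximal:
  assumes "finite K"
    and "\<And>k. k \<in> K \<Longrightarrow> D k > 0"
    and opt: "nmp_optimal K T D C q \<rho>"
    and feas': "nmp_feasible K T D C q \<rho>'"
    and raise: "\<And>k. k \<in> K \<Longrightarrow> \<rho> k \<le> \<rho>' k"
    and "k \<in> K"
  shows "\<rho>' k = \<rho> k"
proof -
  have demand: "(\<Sum>t\<in>T k. q k t) = D k" if "k \<in> K" for k
    using opt that unfolding nmp_optimal_def nmp_feasible_def by auto
  have "zeta K T C q \<rho> \<le> zeta K T C q \<rho>'"
    using opt feas' unfolding nmp_optimal_def by blast
  then have "(\<Sum>k\<in>K. (\<rho>' k - \<rho> k) * D k) \<le> 0"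
    using zeta_diff_levels[of K T C q \<rho> \<rho>'] demand by simp
  moreover have nonneg: "0 \<le> (\<rho>' k - \<rho> k) * D k" if "k \<in> K" for k
    using raise[OF that] assms(2)[OF that] by simp
  ultimately have "(\<Sum>k\<in>K. (\<rho>' k - \<rho> k) * D k) = 0"
    by (meson antisym sum_nonneg)
  then have "(\<rho>' k - \<rho> k) * D k = 0"
    using sum_nonneg_eq_0_iff[OF \<open>finite K\<close>, of "\<lambda>k. (\<rho>' k - \<rho> k) * D k"] nonneg \<open>k \<in> K\<close>
    by blast
  then show ?thesis
    using assms(2)[OF \<open>k \<in> K\<close>] by simp
qed

definition min_cost ::
  "'k set \<Rightarrow> ('k \<Rightarrow> 't set) \<Rightarrow> (('k \<Rightarrow> 't \<Rightarrow> real) \<Rightarrow> 'k \<Rightarrow> 't \<Rightarrow> real)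
    \<Rightarrow> ('k \<Rightarrow> 't \<Rightarrow> real) \<Rightarrow> 'k \<Rightarrow> real" where
  "min_cost K T C q k = (if k \<in> K then Min ((\<lambda>t. C q k t) ` T k) else 0)"

lemma
  assumes "nmp_feasible K T D C q \<rho>"
    and "finite (T k)" "T k \<noteq> {}" "k \<in> K"
  shows level_le_min_cost: "\<rho> k \<le> min_cost K T C q k"
    and min_cost_le_cost: "t \<in> T k \<Longrightarrow> min_cost K T C q k \<le> C q k t"
  using assms unfolding nmp_feasible_def min_cost_def by auto

lemma nmp_feasible_min_cost:
  assumes feas: "nmp_feasible K T D C q \<rho>"
    and "\<And>k. k \<in> K \<Longrightarrow> finite (T k) \<and> T k \<noteq> {}"
  shows "nmp_feasible K T D C q (min_cost K T C q)"
proof -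
  have "0 \<le> min_cost K T C q k" if "k \<in> K" for k
    using level_le_min_cost[OF feas] feas assms(2) that
    unfolding nmp_feasible_def by (meson order_trans)
  then show ?thesis
    using feas min_cost_le_cost[OF feas] assms(2)
    unfolding nmp_feasible_def by (simp add: min_cost_def)
qed

theorem proposition2:
  fixes K :: "'k set" and T :: "'k \<Rightarrow> 't set" and D :: "'k \<Rightarrow> real"
    and C :: "('k \<Rightarrow> 't \<Rightarrow> real) \<Rightarrow> 'k \<Rightarrow> 't \<Rightarrow> real"
    and qs :: "'k \<Rightarrow> 't \<Rightarrow> real" and \<rho>s :: "'k \<Rightarrow> real"
  assumes "finite K"
    and "\<And>k. k \<in> K \<Longrightarrow> finite (T k) \<and> T k \<noteq> {}"
    and "\<And>k. k \<in> K \<Longrightarrow> D k > 0"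
    and "nmp_optimal K T D C qs \<rho>s"
  shows "\<forall>k\<in>K. \<rho>s k = Min ((\<lambda>t. C qs k t) ` T k)"
proof
  fix k assume "k \<in> K"
  have feas: "nmp_feasible K T D C qs \<rho>s"
    using assms(4) unfolding nmp_optimal_def by blast
  have raise: "\<rho>s k' \<le> min_cost K T C qs k'" if "k' \<in> K" for k'
    using level_le_min_cost[OF feas] assms(2)[OF that] that by blast
  from assms(1,3,4) nmp_feasible_min_cost[OF feas assms(2)] raise \<open>k \<in> K\<close>
  have "min_cost K T C qs k = \<rho>s k"
    by (rule nmp_optimal_levels_maximal)
  then show "\<rho>s k = Min ((\<lambda>t. C qs k t) ` T k)"
    using \<open>k \<in> K\<close> by (simp add: min_cost_def)
qed

end
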